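(* Let $n$ and $m_1,\dots,m_n$ be positive integers. Define $f(1)=m_1$ and $f(i)=m_i\left(2\sum_{j=1}^{i-1}f(j)+1\right)$ for $2\le i\le n$, let $x_i=f(i)/m_i$ for $i\in[n]$, and let $\phi(m_1,\dots,m_n)=\sum_{i=1}^n f(i)$. For each $\mathbf{a}=(a_1,\dots,a_n)\in\mathcal{A}:=[m_1]\times\cdots\times[m_n]$ let $$\mathcal{D}_{\mathbf{a}}=\left\{\alpha_1a_1x_1+\cdots+\alpha_na_nx_n \bmod v \;:\; \alpha_i\in\{-1,1\},\ i\in[n]\right\}\subseteq\mathbb{Z}_v,$$ and $\mathfrak{D}=\{\mathcal{D}_{\mathbf{a}}:\mathbf{a}\in\mathcal{A}\}$. Then for every odd positive integer $v\ge 2\phi(m_1,\dots,m_n)+1$, the pair $(\mathbb{Z}_v,\mathfrak{D})$ is a $\left(v,2^n,\prod_{i=1}^n m_i\right)$ non-half-sum disjoint packing.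
   Context: $[m]=\{1,\dots,m\}$. Arithmetic is in $\mathbb{Z}_v$, the integers modulo the odd integer $v$; the half-sum of $x,y\in\mathbb{Z}_v$ is $(x+y)\cdot 2^{-1}$. A $(v,g,b)$ non-half-sum disjoint packing is a pair $(\mathbb{Z}_v,\mathfrak{D})$ where $\mathfrak{D}$ is a family of $b$ subsets ("blocks") of $\mathbb{Z}_v$, each of size $g$, such that (i) any two different blocks are disjoint, and (ii) for each block $\mathcal{D}\in\mathfrak{D}$ and any two different elements $x,y\in\mathcal{D}$, the half-sum $(x+y)/2$ does not belong to any block of $\mathfrak{D}$. *)

theory Defs
  imports Main "HOL-Library.FuncSet"
begin

text \<open>Elements of Z_v are represented by their canonical integer representatives in {0..<v}.\<close>

definition Zv :: "int \<Rightarrow> int set" where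
  "Zv v = {0..<v}"

text \<open>Half-sum in Z_v for odd v: (x+y) times the inverse of 2, which is (v+1)/2.\<close>
definition half_sum :: "int \<Rightarrow> int \<Rightarrow> int \<Rightarrow> int" where
  "half_sum v x y = ((x + y) * ((v + 1) div 2)) mod v"

definition nhs_disjoint_packing :: "int \<Rightarrow> nat \<Rightarrow> nat \<Rightarrow> int set set \<Rightarrow> bool" where
  "nhs_disjoint_packing v g b \<D> \<longleftrightarrow>
     finite \<D> \<and> card \<D> = b \<and>
     (\<forall>D\<in>\<D>. D \<subseteq> Zv v \<and> finite D \<and> card D = g) \<and>
     (\<forall>D1\<in>\<D>. \<forall>D2\<in>\<D>. D1 \<noteq> D2 \<longrightarrow> D1 \<inter> D2 = {}) \<and>
     (\<forall>D\<in>\<D>. \<forall>x\<in>D. \<forall>y\<in>D. x \<noteq> y \<longrightarrow> half_sum v x y \<notin> \<Union>\<D>)"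

text \<open>f(i) for i \<ge> 1: f(1) = m 1 and f(i) = m i * (2 * sum_{j=1}^{i-1} f(j) + 1).
  The value at 0 is an irrelevant dummy.\<close>
function fseq :: "(nat \<Rightarrow> nat) \<Rightarrow> nat \<Rightarrow> int" where
  "fseq m 0 = 0"
| "fseq m (Suc i) = int (m (Suc i)) * (2 * (\<Sum>j\<in>{1..i}. fseq m j) + 1)"
  by pat_completeness auto
termination
  by (relation "measure (\<lambda>(m, i). i)") auto

definition xseq :: "(nat \<Rightarrow> nat) \<Rightarrow> nat \<Rightarrow> int" where
  "xseq m i = fseq m i div int (m i)"

definition phi :: "nat \<Rightarrow> (nat \<Rightarrow> nat) \<Rightarrow> int" where
  "phi n m = (\<Sum>i\<in>{1..n}. fseq m i)"

definition block :: "int \<Rightarrow> nat \<Rightarrow> (nat \<Rightarrow> nat) \<Rightarrow> (nat \<Rightarrow> int) \<Rightarrow> int set" where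
  "block v n m a = {(\<Sum>i\<in>{1..n}. \<alpha> i * a i * xseq m i) mod v
                     | \<alpha>. \<alpha> \<in> {1..n} \<rightarrow>\<^sub>E {-1, 1}}"

definition family :: "int \<Rightarrow> nat \<Rightarrow> (nat \<Rightarrow> nat) \<Rightarrow> int set set" where
  "family v n m = block v n m ` (PiE {1..n} (\<lambda>i. {1..int (m i)}))"

end

theory Submission
  imports Defs
begin

text \<open>Writing S k for the partial sum f(1) + ... + f(k), we have f(i) = m i * x i and
  x (k + 1) = 2 S k + 1, so the weights x i behave like a mixed-radix system: an integer
  combination of them with digits bounded by 2 m i in absolute value has absolute value at most
  2 S n < v, and it vanishes only if every digit does, because the top weight exceeds twice the sum
  of all lower ones. A coincidence between two block elements gives such a combination that is
  divisible by v, with digits alpha_i a_i - beta_i b_i. A half-sum of two elements of one block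
  that lies in a block gives, after doubling (v is odd), one with digits
  (alpha_i + beta_i)/2 a_i - gamma_i b_i, which is nonzero wherever alpha_i and beta_i differ.\<close>

definition fsum :: "(nat \<Rightarrow> nat) \<Rightarrow> nat \<Rightarrow> int" where
  "fsum m k = (\<Sum>j\<in>{1..k}. fseq m j)"

lemma fseq_nonneg: "fseq m i \<ge> 0"
proof (induction m i rule: fseq.induct)
  case (2 m i)
  then have "(\<Sum>j\<in>{1..i}. fseq m j) \<ge> 0" by (intro sum_nonneg) auto
  then show ?case by simp
qed simp

lemma fsum_nonneg: "fsum m k \<ge> 0"
  unfolding fsum_def by (rule sum_nonneg) (simp add: fseq_nonneg)

lemma fseq_Suc: "fseq m (Suc k) = int (m (Suc k)) * (2 * fsum m k + 1)"
  by (simp add: fsum_def)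

lemma xseq_Suc: "m (Suc k) \<ge> 1 \<Longrightarrow> xseq m (Suc k) = 2 * fsum m k + 1"
  unfolding xseq_def fseq_Suc by simp

lemma fseq_eq_mult_xseq:
  assumes "i \<ge> 1" "m i \<ge> 1"
  shows "fseq m i = int (m i) * xseq m i"
  using assms by (cases i) (simp_all add: xseq_Suc fseq_Suc del: fseq.simps)

lemma xseq_pos:
  assumes "i \<ge> 1" "m i \<ge> 1"
  shows "xseq m i > 0"
  using assms by (cases i) (simp_all add: xseq_Suc fsum_nonneg add_nonneg_pos)

lemma half_sum_eq_imp_dvd:
  fixes v x y z :: int
  assumes "odd v" "half_sum v (x mod v) (y mod v) = z mod v"
  shows "v dvd x + y - 2 * z"
proof -
  define h where "h = (v + 1) div 2"
  have h: "v + 1 = 2 * h"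
    using assms(1) unfolding h_def by presburger
  have "(x + y) * h mod v = (x mod v + y mod v) * h mod v"
    by (metis mod_add_eq mod_mult_left_eq)
  also have "\<dots> = z mod v"
    using assms(2) by (simp add: half_sum_def h_def)
  finally have "2 * ((x + y) * h) mod v = 2 * z mod v"
    by (metis mod_mult_right_eq)
  moreover have "2 * ((x + y) * h) = (x + y) * (v + 1)"
    unfolding h by (simp only: ac_simps)
  ultimately show ?thesis
    by (simp add: mod_eq_dvd_iff distrib_left)
qed

lemma abs_weighted_sum_le:
  assumes "\<forall>i\<in>{1..k}. m i \<ge> 1" "\<forall>i\<in>{1..k}. \<bar>d i\<bar> \<le> c * int (m i)"
  shows "\<bar>\<Sum>i\<in>{1..k}. d i * xseq m i\<bar> \<le> c * fsum m k"
proof -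
  have "\<bar>\<Sum>i\<in>{1..k}. d i * xseq m i\<bar> \<le> (\<Sum>i\<in>{1..k}. \<bar>d i * xseq m i\<bar>)"
    by (rule sum_abs)
  also have "\<dots> = (\<Sum>i\<in>{1..k}. \<bar>d i\<bar> * xseq m i)"
    using assms(1) xseq_pos by (intro sum.cong) (auto simp: abs_mult less_imp_le)
  also have "\<dots> \<le> (\<Sum>i\<in>{1..k}. c * int (m i) * xseq m i)"
    using assms xseq_pos by (intro sum_mono mult_right_mono) (auto intro: less_imp_le)
  also have "\<dots> = c * fsum m k"
    using assms(1) by (simp add: fsum_def sum_distrib_left fseq_eq_mult_xseq mult.assoc)
  finally show ?thesis .
qed

lemma weighted_sum_eq_0_imp_zero:
  assumes "\<forall>i\<in>{1..k}. m i \<ge> 1" "\<forall>i\<in>{1..k}. \<bar>d i\<bar> \<le> 2 * int (m i)"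
    and "(\<Sum>i\<in>{1..k}. d i * xseq m i) = 0"
  shows "\<forall>i\<in>{1..k}. d i = 0"
  using assms
proof (induction k)
  case 0
  show ?case by simp
next
  case (Suc k)
  have lower: "\<bar>\<Sum>i\<in>{1..k}. d i * xseq m i\<bar> \<le> 2 * fsum m k"
    using Suc.prems by (intro abs_weighted_sum_le) auto
  have x: "xseq m (Suc k) = 2 * fsum m k + 1"
    using Suc.prems(1) by (intro xseq_Suc) auto
  have sum: "(\<Sum>i\<in>{1..k}. d i * xseq m i) + d (Suc k) * xseq m (Suc k) = 0"
    using Suc.prems(3) by simp
  have top: "d (Suc k) = 0"
  proof (rule ccontr)
    assume "d (Suc k) \<noteq> 0"
    then have "\<bar>d (Suc k) * xseq m (Suc k)\<bar> \<ge> xseq m (Suc k)"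
      using x fsum_nonneg[of m k] by (simp add: abs_mult)
    then show False using lower sum x by linarith
  qed
  have "(\<Sum>i\<in>{1..k}. d i * xseq m i) = 0"
    using sum top by simp
  moreover have "\<forall>i\<in>{1..k}. m i \<ge> 1" "\<forall>i\<in>{1..k}. \<bar>d i\<bar> \<le> 2 * int (m i)"
    using Suc.prems(1,2) by auto
  ultimately have "\<forall>i\<in>{1..k}. d i = 0"
    using Suc.IH by blast
  then show ?case
    using top by (simp add: atLeastAtMostSuc_conv)
qed

lemma weighted_sum_dvd_imp_zero:
  fixes v :: int
  assumes "\<forall>i\<in>{1..k}. m i \<ge> 1" "\<forall>i\<in>{1..k}. \<bar>d i\<bar> \<le> 2 * int (m i)"
    and "v dvd (\<Sum>i\<in>{1..k}. d i * xseq m i)" "v > 2 * fsum m k"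
  shows "\<forall>i\<in>{1..k}. d i = 0"
proof (rule weighted_sum_eq_0_imp_zero[OF assms(1,2)])
  show "(\<Sum>i\<in>{1..k}. d i * xseq m i) = 0"
  proof (rule ccontr)
    assume "(\<Sum>i\<in>{1..k}. d i * xseq m i) \<noteq> 0"
    then have "\<bar>v\<bar> \<le> \<bar>\<Sum>i\<in>{1..k}. d i * xseq m i\<bar>"
      using assms(3) by (rule dvd_imp_le_int)
    then show False
      using abs_weighted_sum_le[OF assms(1,2)] assms(4) by linarith
  qed
qed

locale signed_block_family =
  fixes n :: nat and m :: "nat \<Rightarrow> nat" and v :: int
  assumes m_pos: "\<forall>i\<in>{1..n}. m i \<ge> 1"
    and odd_v: "odd v"
    and v_gt: "v > 2 * fsum m n"
begin

abbreviation signs :: "(nat \<Rightarrow> int) set" where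
  "signs \<equiv> {1..n} \<rightarrow>\<^sub>E {-1, 1}"

abbreviation labels :: "(nat \<Rightarrow> int) set" where
  "labels \<equiv> PiE {1..n} (\<lambda>i. {1..int (m i)})"

definition point :: "(nat \<Rightarrow> int) \<Rightarrow> (nat \<Rightarrow> int) \<Rightarrow> int" where
  "point \<alpha> a = (\<Sum>i\<in>{1..n}. \<alpha> i * a i * xseq m i) mod v"

lemma block_eq_image: "block v n m a = (\<lambda>\<alpha>. point \<alpha> a) ` signs"
  unfolding block_def point_def by auto

lemma point_eq_imp_eq:
  assumes "\<alpha> \<in> signs" "\<beta> \<in> signs" "a \<in> labels" "b \<in> labels" "point \<alpha> a = point \<beta> b"
  shows "\<alpha> = \<beta> \<and> a = b"
proof -
  let ?d = "\<lambda>i. \<alpha> i * a i - \<beta> i * b i"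
  have coord: "\<alpha> i \<in> {-1, 1}" "\<beta> i \<in> {-1, 1}" "a i \<in> {1..int (m i)}" "b i \<in> {1..int (m i)}"
    if "i \<in> {1..n}" for i
    using assms that by auto
  have "v dvd (\<Sum>i\<in>{1..n}. ?d i * xseq m i)"
    using assms(5) by (simp add: point_def mod_eq_dvd_iff sum_subtractf left_diff_distrib)
  moreover have "\<forall>i\<in>{1..n}. \<bar>?d i\<bar> \<le> 2 * int (m i)"
  proof
    fix i assume "i \<in> {1..n}"
    from coord[OF this] show "\<bar>?d i\<bar> \<le> 2 * int (m i)" by auto
  qed
  ultimately have d0: "\<forall>i\<in>{1..n}. ?d i = 0"
    using m_pos v_gt by (intro weighted_sum_dvd_imp_zero) auto
  have coord_eq: "\<alpha> i = \<beta> i \<and> a i = b i" if i: "i \<in> {1..n}" for i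
  proof -
    have "\<alpha> i * a i = \<beta> i * b i" using d0 i by simp
    with coord[OF i] show ?thesis by auto
  qed
  show ?thesis
    by (intro conjI PiE_ext[OF assms(1,2)] PiE_ext[OF assms(3,4)]) (simp_all add: coord_eq)
qed

lemma half_sum_point_imp_eq:
  assumes "\<alpha> \<in> signs" "\<beta> \<in> signs" "\<gamma> \<in> signs" "a \<in> labels" "b \<in> labels"
    and "half_sum v (point \<alpha> a) (point \<beta> a) = point \<gamma> b"
  shows "\<alpha> = \<beta>"
proof -
  \<comment> \<open>the digits of (x + y)/2 - z, where (alpha_i + beta_i)/2 is alpha_i or 0\<close>
  let ?e = "\<lambda>i. (if \<alpha> i = \<beta> i then \<alpha> i * a i else 0) - \<gamma> i * b i"
  have coord: "\<alpha> i \<in> {-1, 1}" "\<beta> i \<in> {-1, 1}" "\<gamma> i \<in> {-1, 1}"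
    "a i \<in> {1..int (m i)}" "b i \<in> {1..int (m i)}"
    if "i \<in> {1..n}" for i
    using assms that by auto
  have "v dvd (\<Sum>i\<in>{1..n}. \<alpha> i * a i * xseq m i) + (\<Sum>i\<in>{1..n}. \<beta> i * a i * xseq m i)
      - 2 * (\<Sum>i\<in>{1..n}. \<gamma> i * b i * xseq m i)"
    using assms(6) unfolding point_def by (rule half_sum_eq_imp_dvd[OF odd_v])
  also have "\<dots> = (\<Sum>i\<in>{1..n}. \<alpha> i * a i * xseq m i + \<beta> i * a i * xseq m i
      - 2 * (\<gamma> i * b i * xseq m i))"
    by (simp add: sum.distrib sum_subtractf sum_distrib_left)
  also have "\<dots> = (\<Sum>i\<in>{1..n}. 2 * (?e i * xseq m i))"
  proof (rule sum.cong)
    fix i assume "i \<in> {1..n}"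
    from coord(1,2)[OF this] show "\<alpha> i * a i * xseq m i + \<beta> i * a i * xseq m i - 2 * (\<gamma> i * b i * xseq m i)
        = 2 * (?e i * xseq m i)"
      by (cases "\<alpha> i = \<beta> i") (auto simp: algebra_simps)
  qed simp
  also have "\<dots> = 2 * (\<Sum>i\<in>{1..n}. ?e i * xseq m i)"
    by (simp add: sum_distrib_left)
  finally have "v dvd (\<Sum>i\<in>{1..n}. ?e i * xseq m i)"
    using odd_v by (simp add: coprime_dvd_mult_right_iff)
  moreover have "\<forall>i\<in>{1..n}. \<bar>?e i\<bar> \<le> 2 * int (m i)"
  proof
    fix i assume "i \<in> {1..n}"
    from coord[OF this] show "\<bar>?e i\<bar> \<le> 2 * int (m i)" by auto
  qed
  ultimately have e0: "\<forall>i\<in>{1..n}. ?e i = 0"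
    using m_pos v_gt by (intro weighted_sum_dvd_imp_zero) auto
  have "\<alpha> i = \<beta> i" if i: "i \<in> {1..n}" for i
  proof (rule ccontr)
    assume "\<alpha> i \<noteq> \<beta> i"
    moreover have "?e i = 0" using e0 i by blast
    ultimately have "\<gamma> i * b i = 0" by simp
    with coord(3,5)[OF i] show False by auto
  qed
  then show ?thesis
    by (rule PiE_ext[OF assms(1,2)])
qed

lemma v_pos: "v > 0"
  using v_gt fsum_nonneg[of m n] by linarith

lemma block_subset_Zv: "block v n m a \<subseteq> Zv v"
  using v_pos by (auto simp: block_eq_image point_def Zv_def)

lemma card_block: "a \<in> labels \<Longrightarrow> card (block v n m a) = 2 ^ n"
proof -
  assume a: "a \<in> labels"
  have "inj_on (\<lambda>\<alpha>. point \<alpha> a) signs"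
    using point_eq_imp_eq a by (auto intro: inj_onI)
  then have "card (block v n m a) = card signs"
    by (simp add: block_eq_image card_image)
  also have "\<dots> = 2 ^ n"
    by (simp add: card_PiE numeral_2_eq_2)
  finally show ?thesis .
qed

lemma blocks_disjoint:
  assumes "a \<in> labels" "b \<in> labels" "block v n m a \<noteq> block v n m b"
  shows "block v n m a \<inter> block v n m b = {}"
proof (rule ccontr)
  assume "block v n m a \<inter> block v n m b \<noteq> {}"
  then obtain \<alpha> \<beta> where "\<alpha> \<in> signs" "\<beta> \<in> signs" "point \<alpha> a = point \<beta> b"
    by (auto simp: block_eq_image)
  with assms(1,2) have "a = b" by (blast dest: point_eq_imp_eq)
  with assms(3) show False by simp
qed

lemma inj_on_block: "inj_on (block v n m) labels"
proof (rule inj_onI)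
  fix a b assume ab: "a \<in> labels" "b \<in> labels" "block v n m a = block v n m b"
  let ?one = "restrict (\<lambda>_. 1) {1..n}"
  have one: "?one \<in> signs" by auto
  then have "point ?one a \<in> block v n m a"
    unfolding block_eq_image by (rule imageI)
  then have "point ?one a \<in> block v n m b"
    using ab(3) by simp
  then obtain \<beta> where "\<beta> \<in> signs" "point ?one a = point \<beta> b"
    by (auto simp: block_eq_image)
  with one ab(1,2) show "a = b" by (blast dest: point_eq_imp_eq)
qed

lemma half_sum_notin_blocks:
  assumes "a \<in> labels" "x \<in> block v n m a" "y \<in> block v n m a" "x \<noteq> y"
  shows "half_sum v x y \<notin> \<Union> (block v n m ` labels)"
proof
  assume "half_sum v x y \<in> \<Union> (block v n m ` labels)"
  then obtain b \<gamma> where b: "b \<in> labels" "\<gamma> \<in> signs" "half_sum v x y = point \<gamma> b"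
    by (auto simp: block_eq_image)
  obtain \<alpha> \<beta> where xy: "\<alpha> \<in> signs" "\<beta> \<in> signs" "x = point \<alpha> a" "y = point \<beta> a"
    using assms(2,3) by (auto simp: block_eq_image)
  have "\<alpha> = \<beta>"
    using half_sum_point_imp_eq[OF xy(1,2) b(2) assms(1) b(1)] b(3) xy(3,4) by simp
  with xy(3,4) assms(4) show False by simp
qed

lemma nhs_disjoint_packing_family:
  "nhs_disjoint_packing v (2 ^ n) (\<Prod>i\<in>{1..n}. m i) (family v n m)"
  unfolding nhs_disjoint_packing_def family_def
proof (intro conjI ballI impI)
  show "finite (block v n m ` labels)"
    by (simp add: finite_PiE)
  show "card (block v n m ` labels) = (\<Prod>i\<in>{1..n}. m i)"
    using card_image[OF inj_on_block] by (simp add: card_PiE)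
next
  fix D assume "D \<in> block v n m ` labels"
  then obtain a where a: "a \<in> labels" and D: "D = block v n m a" by blast
  show "D \<subseteq> Zv v"
    using D block_subset_Zv by simp
  show "card D = 2 ^ n"
    using D card_block[OF a] by simp
  then show "finite D"
    by (simp add: card_ge_0_finite)
next
  fix D1 D2 assume "D1 \<in> block v n m ` labels" "D2 \<in> block v n m ` labels" "D1 \<noteq> D2"
  then show "D1 \<inter> D2 = {}"
    using blocks_disjoint by blast
next
  fix D x y assume "D \<in> block v n m ` labels" "x \<in> D" "y \<in> D" "x \<noteq> y"
  then show "half_sum v x y \<notin> \<Union> (block v n m ` labels)"
    using half_sum_notin_blocks by blast
qed

end

theorem lemma3:
  fixes n :: nat and m :: "nat \<Rightarrow> nat" and v :: int
  assumes "n \<ge> 1"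
    and "\<forall>i\<in>{1..n}. m i \<ge> 1"
    and "odd v" and "v > 0"
    and "v \<ge> 2 * phi n m + 1"
  shows "nhs_disjoint_packing v (2 ^ n) (\<Prod>i\<in>{1..n}. m i) (family v n m)"
proof -
  have "signed_block_family n m v"
    using assms(2,3,5) by unfold_locales (simp_all add: phi_def fsum_def)
  then show ?thesis
    by (rule signed_block_family.nhs_disjoint_packing_family)
qed

end
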